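(* Fix $0<\alpha<1$ and $f\in C^\alpha(\Omega)$. Then for every $\varphi\in C(\Omega)$, $$\lim_{n\to\infty}\left\|\frac1n\,\frac{\mathscr{L}_f^n(S_n\varphi)}{\mathscr{L}_f^n\mathbf{1}}-\int_\Omega\varphi\,h_f\,d\nu_f\right\|_0=0.$$
   Context: Let $(M,d)$ be a compact metric space and $\mu$ a Borel probability measure on $M$ with full support. $\Omega=M^{\mathbb{N}}$ with metric $d_\Omega(x,y)=\sum_{n\ge1}2^{-n}d(x_n,y_n)$, $\sigma$ the left shift, $C(\Omega)$ the continuous functions with sup norm $\|\cdot\|_0$, $C^\alpha(\Omega)$ the $\alpha$-Hölder functions. The Ruelle operator is $\mathscr{L}_f\varphi(x)=\int_M e^{f(ax)}\varphi(ax)\,d\mu(a)$ with $ax=(a,x_1,x_2,\dots)$; $\mathbf 1$ is the constant function $1$; $S_n\varphi=\sum_{j=0}^{n-1}\varphi\circ\sigma^j$. For $f\in C^\alpha(\Omega)$, $\lambda_f>0$, $h_f>0$ and $\nu_f$ are the maximal eigenvalue, eigenfunction and eigenmeasure from the Ruelle–Perron–Frobenius theorem: $\mathscr{L}_fh_f=\lambda_fh_f$, $\mathscr{L}_f^*\nu_f=\lambda_f\nu_f$, $\nu_f$ a probability measure, $\int h_f d\nu_f=1$, and $\|\lambda_f^{-n}\mathscr{L}_f^n\varphi-h_f\int\varphi\,d\nu_f\|_0\to0$ for all $\varphi\in C(\Omega)$. *)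

theory Defs
  imports "HOL-Probability.Probability"
begin

text \<open>The alphabet M is the (compact metric) type 'a; Omega = M^N is the type nat => 'a,
  coordinates indexed from 0 (x 0 is the paper's x_1).\<close>

definition dOm :: "(nat \<Rightarrow> 'a::metric_space) \<Rightarrow> (nat \<Rightarrow> 'a) \<Rightarrow> real" where
  "dOm x y = (\<Sum>n. (1/2) ^ Suc n * dist (x n) (y n))"

definition shift :: "(nat \<Rightarrow> 'a) \<Rightarrow> (nat \<Rightarrow> 'a)" where
  "shift x = (\<lambda>n. x (Suc n))"

definition cons_seq :: "'a \<Rightarrow> (nat \<Rightarrow> 'a) \<Rightarrow> (nat \<Rightarrow> 'a)" where
  "cons_seq a x = case_nat a x"

definition Om_cont :: "((nat \<Rightarrow> 'a::metric_space) \<Rightarrow> real) \<Rightarrow> bool" where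
  "Om_cont \<phi> \<longleftrightarrow> (\<forall>x. \<forall>e>0. \<exists>d>0. \<forall>y. dOm x y < d \<longrightarrow> \<bar>\<phi> y - \<phi> x\<bar> < e)"

definition Om_holder :: "real \<Rightarrow> ((nat \<Rightarrow> 'a::metric_space) \<Rightarrow> real) \<Rightarrow> bool" where
  "Om_holder \<alpha> f \<longleftrightarrow> (\<exists>C. \<forall>x y. \<bar>f x - f y\<bar> \<le> C * dOm x y powr \<alpha>)"

definition Om_open :: "(nat \<Rightarrow> 'a::metric_space) set \<Rightarrow> bool" where
  "Om_open U \<longleftrightarrow> (\<forall>x\<in>U. \<exists>e>0. \<forall>y. dOm x y < e \<longrightarrow> y \<in> U)"

definition Om_borel :: "(nat \<Rightarrow> 'a::metric_space) measure" where
  "Om_borel = sigma UNIV {U. Om_open U}"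

definition ruelle :: "'a measure \<Rightarrow> ((nat \<Rightarrow> 'a) \<Rightarrow> real) \<Rightarrow> ((nat \<Rightarrow> 'a) \<Rightarrow> real)
    \<Rightarrow> (nat \<Rightarrow> 'a) \<Rightarrow> real" where
  "ruelle \<mu> f \<phi> x = (\<integral>a. exp (f (cons_seq a x)) * \<phi> (cons_seq a x) \<partial>\<mu>)"

definition birkhoff :: "nat \<Rightarrow> ((nat \<Rightarrow> 'a) \<Rightarrow> real) \<Rightarrow> (nat \<Rightarrow> 'a) \<Rightarrow> real" where
  "birkhoff n \<phi> x = (\<Sum>j<n. \<phi> ((shift ^^ j) x))"

definition supnorm :: "('b \<Rightarrow> real) \<Rightarrow> real" where
  "supnorm g = (SUP x. \<bar>g x\<bar>)"

end

theory Submission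
  imports Defs
begin

text \<open>
  The metric \<open>d\<^sub>\<Omega>\<close> induces the product topology, so \<open>C(\<Omega>)\<close> consists of the
  continuous functions on the compact space \<open>nat \<Rightarrow> 'a\<close>. Write
  \<open>P n \<psi> = \<lambda>\<^sup>-\<^sup>n L\<^sup>n \<psi>\<close>. Since \<open>L\<^sup>j ((\<phi> \<circ> \<sigma>\<^sup>j) g) = \<phi> L\<^sup>j g\<close>, the normalised Birkhoff
  sum splits as \<open>P n (S\<^sub>n \<phi>) = (\<Sum>j<n. P (n - j) (\<phi> \<cdot> P j 1))\<close>. Positivity of \<open>L\<close> and the
  eigenfunction \<open>h\<close>, bounded above and away from zero, make the operators \<open>P n\<close> uniformly
  bounded; together with \<open>P m \<psi> \<rightarrow> h \<integral>\<psi> d\<nu>\<close> uniformly, each summand is uniformly close to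
  \<open>h \<integral>\<phi>h d\<nu>\<close> once both \<open>j\<close> and \<open>n - j\<close> are large. A Cesaro argument gives
  \<open>P n (S\<^sub>n \<phi>) / n \<rightarrow> h \<integral>\<phi>h d\<nu>\<close>, and dividing by \<open>P n 1 \<rightarrow> h\<close> proves the claim.
\<close>

lemma dOm_commute: "dOm x y = dOm y x"
  unfolding dOm_def by (simp add: dist_commute)

lemma tendsto_coordinatewise_iff:
  fixes X :: "'b \<Rightarrow> nat \<Rightarrow> 'a::topological_space"
  shows "(X \<longlongrightarrow> x) F \<longleftrightarrow> (\<forall>i. ((\<lambda>k. X k i) \<longlongrightarrow> x i) F)"
  using limitin_componentwise[of "\<lambda>i. euclidean" UNIV X x F]
  by (simp add: euclidean_product_topology)

lemma compact_UNIV_sequences: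
  assumes "compact (UNIV :: 'a::topological_space set)"
  shows "compact (UNIV :: (nat \<Rightarrow> 'a) set)"
proof -
  have "compact_space (euclidean :: 'a topology)" using assms by (simp add: compact_space_def)
  then have "compact_space (product_topology (\<lambda>i::nat. euclidean :: 'a topology) UNIV)"
    using compact_space_product_topology by blast
  then show ?thesis by (simp add: euclidean_product_topology compact_space_def)
qed

context
  fixes D :: real
  assumes dist_bounded: "\<And>a b::'a::metric_space. dist a b \<le> D"
begin

lemma summable_dOm_terms: "summable (\<lambda>n. (1/2)^Suc n * dist (x n) (y n :: 'a))"
proof (rule summable_comparison_test')
  show "summable (\<lambda>n. D * (1/2::real)^Suc n)"
    using summable_geometric[of "1/2::real"] by (simp add: summable_mult)
  show "norm ((1/2)^Suc n * dist (x n) (y n)) \<le> D * (1/2)^Suc n" for n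
    using dist_bounded[of "x n" "y n"] by (simp add: mult.commute)
qed

lemma dOm_nonneg: "0 \<le> dOm x (y :: nat \<Rightarrow> 'a)"
  unfolding dOm_def by (rule suminf_nonneg[OF summable_dOm_terms]) simp

lemma dist_le_dOm: "dist (x n) (y n :: 'a) \<le> 2^Suc n * dOm x y"
proof -
  let ?t = "\<lambda>n. (1/2)^Suc n * dist (x n) (y n)"
  have "?t n \<le> sum ?t {..<Suc n}" by (rule member_le_sum) auto
  also have "\<dots> \<le> dOm x y"
    unfolding dOm_def by (rule sum_le_suminf[OF summable_dOm_terms]) auto
  finally have "(1/2)^Suc n * dist (x n) (y n) \<le> dOm x y" .
  then have "2^Suc n * ((1/2)^Suc n * dist (x n) (y n)) \<le> 2^Suc n * dOm x y"
    by (rule mult_left_mono) simp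
  then show ?thesis by (simp add: power_one_over)
qed

lemma tendsto_iff_dOm_tendsto_zero:
  "(X :: nat \<Rightarrow> nat \<Rightarrow> 'a) \<longlonglongrightarrow> x \<longleftrightarrow> (\<lambda>k. dOm (X k) x) \<longlonglongrightarrow> 0"
proof
  assume X: "X \<longlonglongrightarrow> x"
  have coord: "(\<lambda>k. dist (X k i) (x i)) \<longlonglongrightarrow> 0" for i
  proof -
    have "(\<lambda>k. X k i) \<longlonglongrightarrow> x i" using X by (simp add: tendsto_coordinatewise_iff)
    from tendsto_dist[OF this tendsto_const[of "x i"]] show ?thesis by simp
  qed
  have "(\<lambda>k. \<Sum>i. (1/2)^Suc i * dist (X k i) (x i)) \<longlonglongrightarrow> (\<Sum>i. (0::real))"
  proof (rule tannerys_theorem[where M = "\<lambda>i. D * (1/2)^Suc i", THEN conjunct2, THEN conjunct2])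
    show "(\<lambda>k. (1/2)^Suc i * dist (X k i) (x i)) \<longlonglongrightarrow> 0" for i
      using tendsto_mult_left_zero[OF coord[of i], of "(1/2)^Suc i"] by (simp add: mult.commute)
    have "norm ((1/2)^Suc i * dist (X k i) (x i)) \<le> D * (1/2)^Suc i" for i k
      using mult_right_mono[OF dist_bounded[of "X k i" "x i"], of "(1/2)^Suc i"] by (simp add: mult.commute)
    then show "\<forall>\<^sub>F (i, k) in at_top \<times>\<^sub>F sequentially.
        norm ((1/2)^Suc i * dist (X k i) (x i)) \<le> D * (1/2)^Suc i"
      by (simp add: always_eventually)
    show "summable (\<lambda>i. D * (1/2::real)^Suc i)"
      using summable_geometric[of "1/2::real"] by (simp add: summable_mult)
  qed (rule sequentially_bot)
  then show "(\<lambda>k. dOm (X k) x) \<longlonglongrightarrow> 0" by (simp add: dOm_def)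
next
  assume d: "(\<lambda>k. dOm (X k) x) \<longlonglongrightarrow> 0"
  have "(\<lambda>k. dist (X k i) (x i)) \<longlonglongrightarrow> 0" for i
  proof (rule Lim_null_comparison[OF always_eventually])
    show "\<forall>k. norm (dist (X k i) (x i)) \<le> 2^Suc i * dOm (X k) x"
      using dist_le_dOm by simp
    show "(\<lambda>k. 2^Suc i * dOm (X k) x) \<longlonglongrightarrow> 0"
      using tendsto_mult_right_zero[OF d] by simp
  qed
  then have "(\<lambda>k. X k i) \<longlonglongrightarrow> x i" for i
    by (simp add: tendsto_dist_iff[of "\<lambda>k. X k i"])
  then show "X \<longlonglongrightarrow> x" by (simp add: tendsto_coordinatewise_iff)
qed

lemma Om_cont_iff_continuous_on:
  "Om_cont g \<longleftrightarrow> continuous_on UNIV (g :: (nat \<Rightarrow> 'a) \<Rightarrow> real)"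
proof
  assume g: "Om_cont g"
  show "continuous_on UNIV g"
  proof (rule continuous_on_sequentiallyI)
    fix X :: "nat \<Rightarrow> nat \<Rightarrow> 'a" and x assume "X \<longlonglongrightarrow> x"
    then have d: "(\<lambda>k. dOm (X k) x) \<longlonglongrightarrow> 0" by (simp add: tendsto_iff_dOm_tendsto_zero)
    show "(\<lambda>k. g (X k)) \<longlonglongrightarrow> g x"
    proof (rule LIMSEQ_I)
      fix e :: real assume "0 < e"
      then obtain r where "0 < r" and r: "\<And>y. dOm x y < r \<Longrightarrow> \<bar>g y - g x\<bar> < e"
        using g unfolding Om_cont_def by blast
      obtain N where N: "\<forall>k\<ge>N. norm (dOm (X k) x - 0) < r" using LIMSEQ_D[OF d \<open>0 < r\<close>] by blast
      have "norm (g (X k) - g x) < e" if "N \<le> k" for k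
        using r[of "X k"] N[rule_format, OF that] dOm_nonneg[of "X k" x] by (simp add: dOm_commute[of x])
      then show "\<exists>N. \<forall>k\<ge>N. norm (g (X k) - g x) < e" by blast
    qed
  qed
next
  assume g: "continuous_on UNIV g"
  show "Om_cont g"
    unfolding Om_cont_def
  proof (rule ccontr)
    assume "\<not> (\<forall>x. \<forall>e>0. \<exists>d>0. \<forall>y. dOm x y < d \<longrightarrow> \<bar>g y - g x\<bar> < e)"
    then obtain x e where "0 < e" and far: "\<And>d. 0 < d \<Longrightarrow> \<exists>y. dOm x y < d \<and> e \<le> \<bar>g y - g x\<bar>"
      by (meson not_less)
    then have "\<forall>k. \<exists>y. dOm x y < 1 / Suc k \<and> e \<le> \<bar>g y - g x\<bar>"
      by simp
    then obtain X where X: "\<And>k. dOm x (X k) < 1 / Suc k" "\<And>k. e \<le> \<bar>g (X k) - g x\<bar>"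
      by metis
    have "(\<lambda>k. dOm (X k) x) \<longlonglongrightarrow> 0"
    proof (rule Lim_null_comparison[OF always_eventually LIMSEQ_Suc[OF lim_const_over_n]])
      show "\<forall>k. norm (dOm (X k) x) \<le> 1 / real (Suc k)"
        using X(1) dOm_nonneg by (simp add: dOm_commute[of x] less_imp_le)
    qed
    then have "X \<longlonglongrightarrow> x" by (simp add: tendsto_iff_dOm_tendsto_zero)
    then have "(\<lambda>k. g (X k)) \<longlonglongrightarrow> g x"
      using continuous_on_tendsto_compose[OF g] by simp
    then obtain k where "norm (g (X k) - g x) < e" using LIMSEQ_D[OF _ \<open>0 < e\<close>] by blast
    with X(2)[of k] show False by simp
  qed
qed

lemma Om_holder_imp_continuous_on:
  assumes "0 < \<alpha>" and "Om_holder \<alpha> (f :: (nat \<Rightarrow> 'a) \<Rightarrow> real)"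
  shows "continuous_on UNIV f"
proof (rule continuous_on_sequentiallyI)
  obtain C where C: "\<And>x y. \<bar>f x - f y\<bar> \<le> C * dOm x y powr \<alpha>"
    using assms(2) unfolding Om_holder_def by blast
  fix X :: "nat \<Rightarrow> nat \<Rightarrow> 'a" and x assume "X \<longlonglongrightarrow> x"
  then have "(\<lambda>k. dOm (X k) x) \<longlonglongrightarrow> 0"
    by (simp add: tendsto_iff_dOm_tendsto_zero)
  then have bound: "(\<lambda>k. C * dOm (X k) x powr \<alpha>) \<longlonglongrightarrow> 0"
    using dOm_nonneg \<open>0 < \<alpha>\<close>
    by (intro tendsto_mult_right_zero tendsto_zero_powrI) auto
  have "(\<lambda>k. f (X k) - f x) \<longlonglongrightarrow> 0"
    by (rule Lim_null_comparison[OF always_eventually bound]) (simp add: C)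
  then show "(\<lambda>k. f (X k)) \<longlonglongrightarrow> f x"
    by (simp add: LIM_zero_iff)
qed

end

lemma continuous_on_shift: "continuous_on UNIV (shift :: (nat \<Rightarrow> 'a::topological_space) \<Rightarrow> _)"
  unfolding shift_def by (intro continuous_intros continuous_on_product_coordinates)

lemma continuous_on_shift_power:
  "continuous_on UNIV (shift ^^ j :: (nat \<Rightarrow> 'a::topological_space) \<Rightarrow> _)"
  by (induction j) (auto intro: continuous_on_compose2[OF continuous_on_shift])

lemma continuous_on_compose_shift_power:
  "continuous_on UNIV \<phi> \<Longrightarrow> continuous_on UNIV (\<lambda>x. \<phi> ((shift ^^ j) x))"
  by (rule continuous_on_compose2[OF _ continuous_on_shift_power]) auto

lemma continuous_on_cons_seq_left: "continuous_on UNIV (\<lambda>a. cons_seq a x)"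
proof (rule continuous_on_coordinatewise_then_product)
  show "continuous_on UNIV (\<lambda>a. cons_seq a x i)" for i
    by (cases i) (simp_all add: cons_seq_def)
qed

lemma continuous_on_cons_seq_right: "continuous_on UNIV (cons_seq a)"
proof (rule continuous_on_coordinatewise_then_product)
  show "continuous_on UNIV (\<lambda>x. cons_seq a x i)" for i
    by (cases i) (simp_all add: cons_seq_def)
qed

lemma uniform_limit_imp_supnorm_tendsto_zero:
  fixes F :: "nat \<Rightarrow> 'b \<Rightarrow> real"
  assumes "uniform_limit UNIV F g sequentially"
  shows "(\<lambda>n. supnorm (\<lambda>x. F n x - g x)) \<longlonglongrightarrow> 0"
proof (rule LIMSEQ_I)
  fix e :: real assume "0 < e"
  then have "\<forall>\<^sub>F n in sequentially. \<forall>x\<in>UNIV. dist (F n x) (g x) < e/2"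
    by (intro uniform_limitD[OF assms]) simp
  then obtain N where N: "\<And>n x. N \<le> n \<Longrightarrow> \<bar>F n x - g x\<bar> < e/2"
    by (auto simp: eventually_sequentially dist_real_def)
  have "norm (supnorm (\<lambda>x. F n x - g x) - 0) < e" if "N \<le> n" for n
  proof -
    have "bdd_above (range (\<lambda>x. \<bar>F n x - g x\<bar>))"
      by (rule bdd_aboveI2[where M = "e/2"]) (use N[OF that] in \<open>simp add: less_imp_le\<close>)
    then have "\<bar>F n undefined - g undefined\<bar> \<le> supnorm (\<lambda>x. F n x - g x)"
      unfolding supnorm_def by (rule cSUP_upper[rotated]) simp
    moreover have "supnorm (\<lambda>x. F n x - g x) \<le> e/2"
      unfolding supnorm_def using N[OF that] by (intro cSUP_least) (auto intro: less_imp_le)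
    ultimately show ?thesis using \<open>0 < e\<close> by simp
  qed
  then show "\<exists>N. \<forall>n\<ge>N. norm (supnorm (\<lambda>x. F n x - g x) - 0) < e" by blast
qed

lemma supnorm_tendsto_zero_imp_uniform_limit:
  fixes F :: "nat \<Rightarrow> 'b \<Rightarrow> real"
  assumes "\<And>n. bounded (range (\<lambda>x. F n x - g x))"
    and "(\<lambda>n. supnorm (\<lambda>x. F n x - g x)) \<longlonglongrightarrow> 0"
  shows "uniform_limit UNIV F g sequentially"
proof (rule uniform_limitI)
  have le_supnorm: "\<bar>F n x - g x\<bar> \<le> supnorm (\<lambda>x. F n x - g x)" for n x
  proof -
    obtain B where B: "\<And>y. \<bar>F n y - g y\<bar> \<le> B"
      using assms(1)[of n] by (auto simp: bounded_iff)
    have "bdd_above (range (\<lambda>x. \<bar>F n x - g x\<bar>))" by (rule bdd_aboveI2) (rule B)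
    then show ?thesis unfolding supnorm_def by (rule cSUP_upper[rotated]) simp
  qed
  fix e :: real assume "0 < e"
  then obtain N where N: "\<And>n. N \<le> n \<Longrightarrow> norm (supnorm (\<lambda>x. F n x - g x) - 0) < e"
    using LIMSEQ_D[OF assms(2)] by blast
  have "dist (F n x) (g x) < e" if "N \<le> n" for n x
    using N[OF that] le_supnorm[of n x] by (simp add: dist_real_def)
  then show "\<forall>\<^sub>F n in sequentially. \<forall>x\<in>UNIV. dist (F n x) (g x) < e"
    using eventually_sequentially by blast
qed

lemma uniform_limit_cesaro_mean_zero:
  fixes v :: "nat \<Rightarrow> nat \<Rightarrow> 'b \<Rightarrow> real"
  assumes bounded: "\<And>n j x. \<bar>v n j x\<bar> \<le> K"
    and small: "\<And>e. 0 < e \<Longrightarrow> \<exists>N. \<forall>n j x. N \<le> j \<longrightarrow> j + N \<le> n \<longrightarrow> \<bar>v n j x\<bar> \<le> e"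
  shows "uniform_limit UNIV (\<lambda>n x. (\<Sum>j<n. v n j x) / n) (\<lambda>_. 0) sequentially"
proof (rule uniform_limitI)
  fix e :: real assume "0 < e"
  then obtain N where N: "\<And>n j x. N \<le> j \<Longrightarrow> j + N \<le> n \<Longrightarrow> \<bar>v n j x\<bar> \<le> e/2"
    using small[of "e/2"] by auto
  have "0 \<le> K" using bounded[of 0 0 undefined] by linarith
  have sum_bound: "\<bar>\<Sum>j<n. v n j x\<bar> \<le> 2 * N * K + n * (e/2)" for n x
  proof -
    let ?exc = "\<lambda>j. of_bool (j < N) + of_bool (n < j + N) :: real"
    have "\<bar>v n j x\<bar> \<le> K * ?exc j + e/2" for j
      using bounded[of n j x] N[of j n x] \<open>0 \<le> K\<close> \<open>0 < e\<close> by (cases "j < N \<or> n < j + N") auto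
    then have "\<bar>\<Sum>j<n. v n j x\<bar> \<le> (\<Sum>j<n. K * ?exc j + e/2)"
      by (intro order_trans[OF sum_abs] sum_mono)
    also have "\<dots> = K * (card ({..<n} \<inter> {j. j < N}) + card ({..<n} \<inter> {j. n < j + N})) + n * (e/2)"
      by (simp add: sum.distrib sum_distrib_left distrib_left)
    also have "\<dots> \<le> K * (N + N) + n * (e/2)"
    proof -
      have "card ({..<n} \<inter> {j. j < N}) \<le> card {..<N}" by (intro card_mono) auto
      moreover have "card ({..<n} \<inter> {j. n < j + N}) \<le> card {n - N..<n}" by (intro card_mono) auto
      ultimately show ?thesis using \<open>0 \<le> K\<close> by (intro add_right_mono mult_left_mono) auto
    qed
    finally show ?thesis by (simp add: algebra_simps)
  qed
  have "\<bar>(\<Sum>j<n. v n j x) / n\<bar> < e" if "4 * N * K / e < n" for n x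
  proof -
    have "0 \<le> 4 * N * K / e" using \<open>0 \<le> K\<close> \<open>0 < e\<close> by simp
    then have "0 < n" using that by linarith
    have "2 * N * K < n * (e/2)" using that \<open>0 < e\<close> by (simp add: field_simps)
    then have "\<bar>\<Sum>j<n. v n j x\<bar> < n * e" using sum_bound[of n x] by simp
    then show ?thesis using \<open>0 < n\<close> by (simp add: field_simps)
  qed
  moreover have "\<forall>\<^sub>F n in sequentially. 4 * N * K / e < real n"
    using filterlim_real_sequentially unfolding filterlim_at_top_dense by blast
  ultimately show "\<forall>\<^sub>F n in sequentially. \<forall>x\<in>UNIV. dist ((\<Sum>j<n. v n j x) / n) 0 < e"
    by (auto elim: eventually_mono)
qed

lemma bounded_range_continuous:
  assumes "compact (UNIV :: 'a::topological_space set)"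
    and "continuous_on UNIV (g :: (nat \<Rightarrow> 'a) \<Rightarrow> real)"
  shows "bounded (range g)"
  by (rule compact_imp_bounded[OF compact_continuous_image[OF assms(2) compact_UNIV_sequences[OF assms(1)]]])

locale ruelle_operator = prob_space \<mu> for \<mu> :: "'a::metric_space measure" +
  fixes f :: "(nat \<Rightarrow> 'a) \<Rightarrow> real"
  assumes compact_alphabet: "compact (UNIV :: 'a set)"
    and sets_eq_borel: "sets \<mu> = sets borel"
    and continuous_potential: "continuous_on UNIV f"
begin

abbreviation L where "L \<equiv> ruelle \<mu> f"

lemma borel_measurable_cons_seq:
  "continuous_on UNIV g \<Longrightarrow> (\<lambda>a. g (cons_seq a x)) \<in> borel_measurable \<mu>"
  using borel_measurable_continuous_onI[OF continuous_on_compose2[OF _ continuous_on_cons_seq_left]]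
    measurable_cong_sets[OF sets_eq_borel refl] by blast

lemma continuous_weight:
  "continuous_on UNIV g \<Longrightarrow> continuous_on UNIV (\<lambda>y. exp (f y) * g y)"
  by (intro continuous_intros continuous_potential)

lemma integrable_ruelle_integrand:
  assumes "continuous_on UNIV g"
  shows "integrable \<mu> (\<lambda>a. exp (f (cons_seq a x)) * g (cons_seq a x))"
proof -
  note w = continuous_weight[OF assms]
  obtain B where "\<And>y. \<bar>exp (f y) * g y\<bar> \<le> B"
    using bounded_range_continuous[OF compact_alphabet w] by (auto simp: bounded_iff)
  then show ?thesis
    by (intro integrable_const_bound[where B = B] borel_measurable_cons_seq[OF w]) auto
qed

lemma continuous_on_ruelle:
  assumes "continuous_on UNIV g"
  shows "continuous_on UNIV (L g)"
proof (rule continuous_on_sequentiallyI)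
  note w = continuous_weight[OF assms]
  obtain B where B: "\<And>y. \<bar>exp (f y) * g y\<bar> \<le> B"
    using bounded_range_continuous[OF compact_alphabet w] by (auto simp: bounded_iff)
  fix X :: "nat \<Rightarrow> nat \<Rightarrow> 'a" and x assume "X \<longlonglongrightarrow> x"
  have "(\<lambda>k. \<integral>a. exp (f (cons_seq a (X k))) * g (cons_seq a (X k)) \<partial>\<mu>)
      \<longlonglongrightarrow> (\<integral>a. exp (f (cons_seq a x)) * g (cons_seq a x) \<partial>\<mu>)"
  proof (rule integral_dominated_convergence[where w = "\<lambda>_. B"])
    show "AE a in \<mu>. (\<lambda>k. exp (f (cons_seq a (X k))) * g (cons_seq a (X k)))
        \<longlonglongrightarrow> exp (f (cons_seq a x)) * g (cons_seq a x)"
      using continuous_on_tendsto_compose[OF continuous_on_compose2[OF w continuous_on_cons_seq_right]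
          \<open>X \<longlonglongrightarrow> x\<close>] by simp
  qed (use B borel_measurable_cons_seq[OF w] in auto)
  then show "(\<lambda>k. L g (X k)) \<longlonglongrightarrow> L g x" by (simp add: ruelle_def)
qed

lemma ruelle_add:
  assumes "continuous_on UNIV g" "continuous_on UNIV k"
  shows "L (\<lambda>y. g y + k y) = (\<lambda>x. L g x + L k x)"
  using Bochner_Integration.integral_add[OF integrable_ruelle_integrand[OF assms(1)]
      integrable_ruelle_integrand[OF assms(2)]]
  by (simp add: fun_eq_iff ruelle_def distrib_left)

lemma ruelle_scale: "L (\<lambda>y. c * g y) = (\<lambda>x. c * L g x)"
  by (simp add: fun_eq_iff ruelle_def mult.left_commute)

lemma ruelle_mono:
  assumes "continuous_on UNIV g" "continuous_on UNIV k" "\<And>y. g y \<le> k y"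
  shows "L g x \<le> L k x"
  unfolding ruelle_def using assms(3)
  by (intro integral_mono integrable_ruelle_integrand assms(1,2)) simp

lemma ruelle_pull: "L (\<lambda>y. k (shift y) * \<psi> y) = (\<lambda>x. k x * L \<psi> x)"
  by (simp add: fun_eq_iff ruelle_def shift_def cons_seq_def mult.left_commute)

lemma continuous_on_ruelle_power:
  "continuous_on UNIV g \<Longrightarrow> continuous_on UNIV ((L ^^ n) g)"
  by (induction n) (auto intro: continuous_on_ruelle)

lemma ruelle_power_add:
  assumes "continuous_on UNIV g" "continuous_on UNIV k"
  shows "(L ^^ n) (\<lambda>y. g y + k y) = (\<lambda>x. (L ^^ n) g x + (L ^^ n) k x)"
  by (induction n) (simp_all add: ruelle_add continuous_on_ruelle_power assms)

lemma ruelle_power_scale: "(L ^^ n) (\<lambda>y. c * g y) = (\<lambda>x. c * (L ^^ n) g x)"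
  by (induction n) (simp_all add: ruelle_scale)

lemma ruelle_power_sum:
  assumes "finite I" "\<And>i. i \<in> I \<Longrightarrow> continuous_on UNIV (g i)"
  shows "(L ^^ n) (\<lambda>y. \<Sum>i\<in>I. g i y) = (\<lambda>x. \<Sum>i\<in>I. (L ^^ n) (g i) x)"
  using assms
proof (induction I rule: finite_induct)
  case empty
  show ?case using ruelle_power_scale[of n 0 "\<lambda>_. 0"] by simp
next
  case (insert i I)
  then show ?case
    by (simp add: ruelle_power_add continuous_on_sum)
qed

lemma ruelle_power_mono:
  assumes "continuous_on UNIV g" "continuous_on UNIV k" "\<And>y. g y \<le> k y"
  shows "(L ^^ n) g x \<le> (L ^^ n) k x"
proof (induction n arbitrary: x)
  case (Suc n)
  then show ?case
    by (simp add: ruelle_mono continuous_on_ruelle_power assms(1,2))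
qed (simp add: assms(3))

lemma ruelle_power_pull:
  "(L ^^ j) (\<lambda>y. k ((shift ^^ j) y) * \<psi> y) = (\<lambda>x. k x * (L ^^ j) \<psi> x)"
proof (induction j arbitrary: k)
  case (Suc j)
  have "(L ^^ Suc j) (\<lambda>y. k ((shift ^^ Suc j) y) * \<psi> y)
      = L ((L ^^ j) (\<lambda>y. (\<lambda>z. k (shift z)) ((shift ^^ j) y) * \<psi> y))"
    by (simp add: funpow_Suc_right)
  also have "\<dots> = (\<lambda>x. k x * (L ^^ Suc j) \<psi> x)"
    by (simp add: Suc.IH[of "\<lambda>z. k (shift z)"] ruelle_pull)
  finally show ?case .
qed simp

end

locale ruelle_eigenfunction = ruelle_operator +
  fixes lam :: real and h :: "(nat \<Rightarrow> 'a) \<Rightarrow> real"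
  assumes lam_pos: "0 < lam"
    and continuous_eigenfunction: "continuous_on UNIV h"
    and eigenfunction_pos: "\<And>x. 0 < h x"
    and eigenfunction: "\<And>x. L h x = lam * h x"
begin

definition P :: "nat \<Rightarrow> ((nat \<Rightarrow> 'a) \<Rightarrow> real) \<Rightarrow> (nat \<Rightarrow> 'a) \<Rightarrow> real" where
  "P n \<psi> x = (L ^^ n) \<psi> x / lam ^ n"

lemma eigenfunction_bounds:
  obtains m M where "0 < m" "\<And>x. m \<le> h x" "\<And>x. h x \<le> M"
proof -
  note cpt = compact_UNIV_sequences[OF compact_alphabet]
  obtain a where a: "\<And>x. h a \<le> h x"
    using continuous_attains_inf[OF cpt _ continuous_eigenfunction] by auto
  obtain b where b: "\<And>x. h x \<le> h b"
    using continuous_attains_sup[OF cpt _ continuous_eigenfunction] by auto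
  show ?thesis using that[OF eigenfunction_pos a b] .
qed

lemma ruelle_power_eigenfunction: "(L ^^ n) h = (\<lambda>x. lam ^ n * h x)"
proof (induction n)
  case (Suc n)
  have "(L ^^ Suc n) h = L (\<lambda>x. lam ^ n * h x)" using Suc by simp
  also have "\<dots> = (\<lambda>x. lam ^ Suc n * h x)"
    unfolding ruelle_scale by (simp add: eigenfunction mult_ac)
  finally show ?case .
qed simp

lemma continuous_on_P: "continuous_on UNIV \<psi> \<Longrightarrow> continuous_on UNIV (P n \<psi>)"
  unfolding P_def[abs_def] using lam_pos by (intro continuous_intros continuous_on_ruelle_power) auto

lemma P_add:
  "continuous_on UNIV g \<Longrightarrow> continuous_on UNIV k \<Longrightarrow> P n (\<lambda>y. g y + k y) x = P n g x + P n k x"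
  by (simp add: P_def ruelle_power_add add_divide_distrib)

lemma P_bound:
  obtains K where "0 \<le> K"
    and "\<And>n \<psi> B x. continuous_on UNIV \<psi> \<Longrightarrow> (\<And>y. \<bar>\<psi> y\<bar> \<le> B) \<Longrightarrow> \<bar>P n \<psi> x\<bar> \<le> K * B"
proof -
  obtain m M where m: "0 < m" "\<And>x. m \<le> h x" and M: "\<And>x. h x \<le> M"
    using eigenfunction_bounds by blast
  have "\<bar>P n \<psi> x\<bar> \<le> M / m * B" if \<psi>: "continuous_on UNIV \<psi>" "\<And>y. \<bar>\<psi> y\<bar> \<le> B" for n \<psi> B x
  proof -
    have "0 \<le> B" using \<psi>(2)[of x] by linarith
    have B_le: "B \<le> B / m * h y" for y
      using mult_left_mono[OF m(2)[of y] \<open>0 \<le> B\<close>] m(1) by (simp add: field_simps)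
    have h_cont: "continuous_on UNIV (\<lambda>y. c * h y)" for c
      by (intro continuous_intros continuous_eigenfunction)
    have between: "\<psi> y \<le> B / m * h y" "- (B / m) * h y \<le> \<psi> y" for y
      using \<psi>(2)[of y] B_le[of y] by (auto simp: abs_le_iff)
    have "(L ^^ n) \<psi> x \<le> (L ^^ n) (\<lambda>y. B / m * h y) x"
      by (rule ruelle_power_mono[OF \<psi>(1) h_cont]) (rule between(1))
    moreover have "(L ^^ n) (\<lambda>y. - (B / m) * h y) x \<le> (L ^^ n) \<psi> x"
      by (rule ruelle_power_mono[OF h_cont \<psi>(1)]) (rule between(2))
    ultimately have "(L ^^ n) \<psi> x \<le> B / m * (lam ^ n * h x)" "- (B / m) * (lam ^ n * h x) \<le> (L ^^ n) \<psi> x"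
      by (simp_all only: ruelle_power_scale ruelle_power_eigenfunction)
    then have "\<bar>(L ^^ n) \<psi> x\<bar> \<le> B / m * (lam ^ n * h x)"
      by linarith
    also have "\<dots> \<le> B / m * (lam ^ n * M)"
      using M[of x] \<open>0 \<le> B\<close> m(1) lam_pos by (intro mult_left_mono) auto
    finally have "\<bar>(L ^^ n) \<psi> x\<bar> / lam ^ n \<le> B / m * (lam ^ n * M) / lam ^ n"
      using lam_pos by (intro divide_right_mono) auto
    then show ?thesis
      using lam_pos by (simp add: P_def mult.commute)
  qed
  moreover have "0 \<le> M / m" using M[of undefined] m(1) eigenfunction_pos[of undefined] by simp
  ultimately show ?thesis using that by blast
qed

lemma P_birkhoff:
  assumes "continuous_on UNIV \<phi>"
  shows "P n (birkhoff n \<phi>) x = (\<Sum>j<n. P (n - j) (\<lambda>y. \<phi> y * P j (\<lambda>_. 1) y) x)"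
proof -
  have summand: "(L ^^ n) (\<lambda>y. \<phi> ((shift ^^ j) y)) x / lam ^ n = P (n - j) (\<lambda>y. \<phi> y * P j (\<lambda>_. 1) y) x"
    if "j < n" for j
  proof -
    have split: "L ^^ n = (L ^^ (n - j)) \<circ> (L ^^ j)"
      using funpow_add[of "n - j" j L] that by simp
    have "(L ^^ n) (\<lambda>y. \<phi> ((shift ^^ j) y)) x = (L ^^ (n - j)) (\<lambda>y. \<phi> y * (L ^^ j) (\<lambda>_. 1) y) x"
      using ruelle_power_pull[of j \<phi> "\<lambda>_. 1"] by (simp add: split)
    moreover have "P (n - j) (\<lambda>y. \<phi> y * P j (\<lambda>_. 1) y) x
        = (L ^^ (n - j)) (\<lambda>y. \<phi> y * (L ^^ j) (\<lambda>_. 1) y) x / lam ^ j / lam ^ (n - j)"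
    proof -
      have weight: "(\<lambda>y. \<phi> y * P j (\<lambda>_. 1) y) = (\<lambda>y. 1 / lam ^ j * (\<phi> y * (L ^^ j) (\<lambda>_. 1) y))"
        by (simp add: P_def fun_eq_iff)
      show ?thesis
        unfolding P_def[of "n - j"] weight ruelle_power_scale by simp
    qed
    moreover have "lam ^ n = lam ^ j * lam ^ (n - j)"
      using that by (simp flip: power_add)
    ultimately show ?thesis by simp
  qed
  have "(L ^^ n) (birkhoff n \<phi>) x = (\<Sum>j<n. (L ^^ n) (\<lambda>y. \<phi> ((shift ^^ j) y)) x)"
    unfolding birkhoff_def[abs_def]
    by (simp add: ruelle_power_sum continuous_on_compose_shift_power assms)
  then show ?thesis
    unfolding P_def[of n] by (simp add: sum_divide_distrib summand)
qed

end

text \<open>\<open>I\<close> stands for \<open>\<psi> \<mapsto> \<integral>\<psi> d\<nu>\<close>.\<close>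

locale ruelle_perron_frobenius = ruelle_eigenfunction +
  fixes I :: "((nat \<Rightarrow> 'a) \<Rightarrow> real) \<Rightarrow> real"
  assumes uniform_limit_P:
      "\<And>\<psi>. continuous_on UNIV \<psi> \<Longrightarrow> uniform_limit UNIV (\<lambda>n. P n \<psi>) (\<lambda>x. h x * I \<psi>) sequentially"
    and I_one: "I (\<lambda>_. 1) = 1"
begin

lemma uniform_limit_P_one: "uniform_limit UNIV (\<lambda>n. P n (\<lambda>_. 1)) h sequentially"
  using uniform_limit_P[of "\<lambda>_. 1"] by (simp add: I_one)

lemma P_weighted_term_small:
  assumes \<phi>: "continuous_on UNIV \<phi>" and "0 < e"
  shows "\<exists>N. \<forall>n j x. N \<le> j \<longrightarrow> j + N \<le> n \<longrightarrow>
    \<bar>P (n - j) (\<lambda>y. \<phi> y * P j (\<lambda>_. 1) y) x - h x * I (\<lambda>y. \<phi> y * h y)\<bar> \<le> e"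
proof -
  obtain K where "0 \<le> K"
    and K: "\<And>n \<psi> B x. continuous_on UNIV \<psi> \<Longrightarrow> (\<And>y. \<bar>\<psi> y\<bar> \<le> B) \<Longrightarrow> \<bar>P n \<psi> x\<bar> \<le> K * B"
    using P_bound by blast
  obtain B\<phi> where B\<phi>: "\<And>y. \<bar>\<phi> y\<bar> \<le> B\<phi>"
    using bounded_range_continuous[OF compact_alphabet \<phi>] by (auto simp: bounded_iff)
  then have "0 \<le> K * B\<phi>" using \<open>0 \<le> K\<close> by (meson abs_ge_zero order_trans mult_nonneg_nonneg)
  define \<delta> where "\<delta> = e / (2 * (K * B\<phi> + 1))"
  have "0 < \<delta>"
    unfolding \<delta>_def using \<open>0 < e\<close> \<open>0 \<le> K * B\<phi>\<close> by simp
  have \<phi>h: "continuous_on UNIV (\<lambda>y. \<phi> y * h y)"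
    by (intro continuous_intros \<phi> continuous_eigenfunction)
  obtain N1 where N1: "\<And>n x. N1 \<le> n \<Longrightarrow> \<bar>P n (\<lambda>y. \<phi> y * h y) x - h x * I (\<lambda>y. \<phi> y * h y)\<bar> < e / 2"
    using uniform_limitD[OF uniform_limit_P[OF \<phi>h], of "e / 2"] \<open>0 < e\<close>
    by (auto simp: eventually_sequentially dist_real_def)
  obtain N2 where N2: "\<And>j y. N2 \<le> j \<Longrightarrow> \<bar>P j (\<lambda>_. 1) y - h y\<bar> < \<delta>"
    using uniform_limitD[OF uniform_limit_P_one \<open>0 < \<delta>\<close>]
    by (auto simp: eventually_sequentially dist_real_def)
  have "\<bar>P (n - j) (\<lambda>y. \<phi> y * P j (\<lambda>_. 1) y) x - h x * I (\<lambda>y. \<phi> y * h y)\<bar> \<le> e"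
    if "max N1 N2 \<le> j" "j + max N1 N2 \<le> n" for n j x
  proof -
    define d where "d y = \<phi> y * (P j (\<lambda>_. 1) y - h y)" for y
    have d_cont: "continuous_on UNIV d"
      unfolding d_def[abs_def] by (intro continuous_intros \<phi> continuous_eigenfunction continuous_on_P)
    have "(\<lambda>y. \<phi> y * P j (\<lambda>_. 1) y) = (\<lambda>y. \<phi> y * h y + d y)"
      by (simp add: d_def fun_eq_iff algebra_simps)
    then have split: "P (n - j) (\<lambda>y. \<phi> y * P j (\<lambda>_. 1) y) x = P (n - j) (\<lambda>y. \<phi> y * h y) x + P (n - j) d x"
      by (simp add: P_add[OF \<phi>h d_cont])
    have "\<bar>d y\<bar> \<le> B\<phi> * \<delta>" for y
      unfolding d_def abs_mult
      using B\<phi>[of y] N2[of j y] that by (intro mult_mono) auto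
    then have "\<bar>P (n - j) d x\<bar> \<le> K * (B\<phi> * \<delta>)" by (rule K[OF d_cont])
    also have "\<dots> = e / 2 * (K * B\<phi> / (K * B\<phi> + 1))"
      by (simp add: \<delta>_def)
    also have "\<dots> \<le> e / 2"
      using \<open>0 < e\<close> \<open>0 \<le> K * B\<phi>\<close> by (intro mult_left_le) (auto simp: divide_le_eq_1)
    finally show ?thesis
      using split N1[of "n - j" x] that by linarith
  qed
  then show ?thesis by blast
qed

lemma uniform_limit_P_birkhoff:
  assumes \<phi>: "continuous_on UNIV \<phi>"
  shows "uniform_limit UNIV (\<lambda>n x. P n (birkhoff n \<phi>) x / n) (\<lambda>x. h x * I (\<lambda>y. \<phi> y * h y)) sequentially"
proof -
  define c where "c = I (\<lambda>y. \<phi> y * h y)"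
  define v where "v n j x = P (n - j) (\<lambda>y. \<phi> y * P j (\<lambda>_. 1) y) x - h x * c" for n j x
  obtain K where "0 \<le> K"
    and K: "\<And>n \<psi> B x. continuous_on UNIV \<psi> \<Longrightarrow> (\<And>y. \<bar>\<psi> y\<bar> \<le> B) \<Longrightarrow> \<bar>P n \<psi> x\<bar> \<le> K * B"
    using P_bound by blast
  obtain B\<phi> where B\<phi>: "\<And>y. \<bar>\<phi> y\<bar> \<le> B\<phi>"
    using bounded_range_continuous[OF compact_alphabet \<phi>] by (auto simp: bounded_iff)
  obtain M where M: "\<And>x. \<bar>h x\<bar> \<le> M"
    using bounded_range_continuous[OF compact_alphabet continuous_eigenfunction] by (auto simp: bounded_iff)
  have "\<bar>v n j x\<bar> \<le> K * (B\<phi> * K) + M * \<bar>c\<bar>" for n j x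
  proof -
    have "\<bar>\<phi> y * P j (\<lambda>_. 1) y\<bar> \<le> B\<phi> * K" for y
      unfolding abs_mult using B\<phi>[of y] K[of "\<lambda>_. 1" 1 j y] \<open>0 \<le> K\<close>
      by (intro mult_mono) auto
    then have "\<bar>P (n - j) (\<lambda>y. \<phi> y * P j (\<lambda>_. 1) y) x\<bar> \<le> K * (B\<phi> * K)"
      by (intro K continuous_intros \<phi> continuous_on_P)
    moreover have "\<bar>h x * c\<bar> \<le> M * \<bar>c\<bar>"
      unfolding abs_mult by (intro mult_right_mono M) simp
    ultimately show ?thesis unfolding v_def by linarith
  qed
  then have "uniform_limit UNIV (\<lambda>n x. (\<Sum>j<n. v n j x) / n) (\<lambda>_. 0) sequentially"
    by (rule uniform_limit_cesaro_mean_zero) (use P_weighted_term_small[OF \<phi>] in \<open>simp add: v_def c_def\<close>)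
  then have "uniform_limit UNIV (\<lambda>n x. (\<Sum>j<n. v n j x) / n + h x * c) (\<lambda>x. 0 + h x * c) sequentially"
    by (intro uniform_limit_add uniform_limit_const)
  moreover have "\<forall>\<^sub>F n in sequentially. \<forall>x\<in>UNIV. (\<Sum>j<n. v n j x) / n + h x * c = P n (birkhoff n \<phi>) x / n"
    using eventually_gt_at_top[of 0]
    by eventually_elim (simp add: v_def P_birkhoff[OF \<phi>] sum_subtractf field_simps)
  ultimately show ?thesis
    unfolding c_def by (simp add: uniform_limit_cong)
qed

lemma uniform_limit_birkhoff_ratio:
  assumes "continuous_on UNIV \<phi>"
  shows "uniform_limit UNIV (\<lambda>n x. 1 / real n * ((L ^^ n) (birkhoff n \<phi>) x / (L ^^ n) (\<lambda>_. 1) x))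
    (\<lambda>_. I (\<lambda>y. \<phi> y * h y)) sequentially"
proof -
  obtain m M where "0 < m" "\<And>x. m \<le> h x" "\<And>x. h x \<le> M" using eigenfunction_bounds by blast
  have "uniform_limit UNIV (\<lambda>n x. (P n (birkhoff n \<phi>) x / n) / P n (\<lambda>_. 1) x)
      (\<lambda>x. h x * I (\<lambda>y. \<phi> y * h y) / h x) sequentially"
  proof (rule uniform_lim_divide[OF uniform_limit_P_birkhoff[OF assms] uniform_limit_P_one _ _ \<open>0 < m\<close>])
    show "bounded (range (\<lambda>x. h x * I (\<lambda>y. \<phi> y * h y)))"
      by (intro bounded_range_continuous[OF compact_alphabet] continuous_intros continuous_eigenfunction)
    show "m \<le> norm (h x)" for x using \<open>m \<le> h x\<close> \<open>0 < m\<close> by simp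
  qed
  moreover have "(P n (birkhoff n \<phi>) x / n) / P n (\<lambda>_. 1) x
      = 1 / real n * ((L ^^ n) (birkhoff n \<phi>) x / (L ^^ n) (\<lambda>_. 1) x)" for n x
    using lam_pos by (cases "(L ^^ n) (\<lambda>_. 1) x = 0") (simp_all add: P_def field_simps)
  moreover have "h x * I (\<lambda>y. \<phi> y * h y) / h x = I (\<lambda>y. \<phi> y * h y)" for x
    using eigenfunction_pos[of x] by simp
  ultimately show ?thesis by simp
qed

end

theorem mainTheorem4:
  fixes \<mu> :: "'a::metric_space measure"
    and \<nu> :: "(nat \<Rightarrow> 'a) measure"
    and f h :: "(nat \<Rightarrow> 'a) \<Rightarrow> real"
    and \<alpha> lam :: real
  assumes M_compact: "compact (UNIV :: 'a set)"
    and mu_prob: "prob_space \<mu>"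
    and mu_borel: "sets \<mu> = sets borel"
    and mu_full_support: "\<And>U. open U \<Longrightarrow> U \<noteq> {} \<Longrightarrow> emeasure \<mu> U > 0"
    and alpha: "0 < \<alpha>" "\<alpha> < 1"
    and f_holder: "Om_holder \<alpha> f"
    and lam_pos: "lam > 0"
    and h_cont: "Om_cont h"
    and h_pos: "\<And>x. h x > 0"
    and h_eigen: "\<And>x. ruelle \<mu> f h x = lam * h x"
    and nu_prob: "prob_space \<nu>"
    and nu_borel: "sets \<nu> = sets Om_borel"
    and nu_eigen: "\<And>\<psi>. Om_cont \<psi> \<Longrightarrow> (\<integral>x. ruelle \<mu> f \<psi> x \<partial>\<nu>) = lam * (\<integral>x. \<psi> x \<partial>\<nu>)"
    and h_normalized: "(\<integral>x. h x \<partial>\<nu>) = 1"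
    and RPF_conv: "\<And>\<psi>. Om_cont \<psi> \<Longrightarrow>
        (\<lambda>n. supnorm (\<lambda>x. (ruelle \<mu> f ^^ n) \<psi> x / lam ^ n - h x * (\<integral>y. \<psi> y \<partial>\<nu>))) \<longlonglongrightarrow> 0"
    and phi_cont: "Om_cont \<phi>"
  shows "(\<lambda>n. supnorm (\<lambda>x. (1 / real n) * ((ruelle \<mu> f ^^ n) (birkhoff n \<phi>) x
                / (ruelle \<mu> f ^^ n) (\<lambda>_. 1) x) - (\<integral>y. \<phi> y * h y \<partial>\<nu>))) \<longlonglongrightarrow> 0"
proof -
  obtain D where D: "\<And>a b::'a. dist a b \<le> D"
    using compact_imp_bounded[OF M_compact] unfolding bounded_two_points by blast
  have cont: "Om_cont \<psi> \<longleftrightarrow> continuous_on UNIV \<psi>" for \<psi> :: "(nat \<Rightarrow> 'a) \<Rightarrow> real"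
    by (rule Om_cont_iff_continuous_on[OF D])
  have "ruelle_operator \<mu> f"
    by (intro ruelle_operator.intro ruelle_operator_axioms.intro mu_prob M_compact mu_borel
        Om_holder_imp_continuous_on[OF D alpha(1) f_holder])
  then have eigen: "ruelle_eigenfunction \<mu> f lam h"
    by (intro ruelle_eigenfunction.intro ruelle_eigenfunction_axioms.intro)
      (use lam_pos h_cont h_pos h_eigen in \<open>simp_all add: cont\<close>)
  interpret ruelle_eigenfunction \<mu> f lam h by (rule eigen)
  interpret ruelle_perron_frobenius \<mu> f lam h "\<lambda>\<psi>. \<integral>x. \<psi> x \<partial>\<nu>"
  proof (intro ruelle_perron_frobenius.intro[OF eigen] ruelle_perron_frobenius_axioms.intro)
    fix \<psi> :: "(nat \<Rightarrow> 'a) \<Rightarrow> real" assume \<psi>: "continuous_on UNIV \<psi>"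
    show "uniform_limit UNIV (\<lambda>n. P n \<psi>) (\<lambda>x. h x * (\<integral>x. \<psi> x \<partial>\<nu>)) sequentially"
    proof (rule supnorm_tendsto_zero_imp_uniform_limit)
      show "bounded (range (\<lambda>x. P n \<psi> x - h x * (\<integral>x. \<psi> x \<partial>\<nu>)))" for n
        by (intro bounded_range_continuous[OF M_compact] continuous_intros continuous_on_P \<psi> h_cont[unfolded cont])
      show "(\<lambda>n. supnorm (\<lambda>x. P n \<psi> x - h x * (\<integral>x. \<psi> x \<partial>\<nu>))) \<longlonglongrightarrow> 0"
        using RPF_conv[of \<psi>] \<psi> by (simp add: cont P_def)
    qed
  next
    show "(\<integral>x. 1 \<partial>\<nu>) = (1::real)" using prob_space.prob_space[OF nu_prob] by simp
  qed
  show ?thesis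
    using uniform_limit_imp_supnorm_tendsto_zero[OF uniform_limit_birkhoff_ratio] phi_cont
    by (simp add: cont)
qed

end
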